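(* Let $L$ be an indexed language with threshold $l$, let $w\in L$ with a set of at least $l$ marked positions, and let $u_i$, $v_{i,j}$, $I$, $\phi$ be any factorization and map satisfying properties (1)–(4) of the threshold definition. Then for every $t\ge0$, the word $w^{(t)}$ has at least $t$ marked positions.
   Context: Indexed languages are the languages generated by indexed grammars (grammars whose nonterminals carry stacks of symbols that can be pushed, popped and copied to all nonterminals produced by a rule). An integer $l\ge0$ is a threshold for a language $L$ if for every $w\in L$ with a set of at least $l$ marked positions there are: (1) a factorization $w=u_1\cdots u_n$, $u_i=v_{i,1}\cdots v_{i,n_i}$, with $I=\{(i,j):1\le i\le n,1\le j\le n_i\}$; (2) a map $\phi:I\to\{1,\dots,n\}$ with $w^{(t)}\in L$ for all $t\ge0$, where $v^{(0)}_{i,j}=v_{i,j}$, $u_i^{(t)}=v_{i,1}^{(t)}\cdots v_{i,n_i}^{(t)}$, $v_{i,j}^{(t+1)}=u^{(t)}_{\phi(i,j)}$, $w^{(t)}=u_1^{(t)}\cdots u_n^{(t)}$; (3) if $v_{i,j}$ contains a marked position then so does $u_{\phi(i,j)}$; (4) some $(\mathbf i,\mathbf j)\in I$ has $\phi(\mathbf i,\mathbf j)=\mathbf i$ and $u_{\mathbf i}$ has a marked position outside $v_{\mathbf i,\mathbf j}$. (Every indexed language has a threshold.) Marked positions of $w^{(t)}$: introduce a symbol $x_{i,j}$ for each $(i,j)\in I$, the morphism $h(x_{i,j})=x_{\phi(i,j),1}\cdots x_{\phi(i,j),n_{\phi(i,j)}}$ and $X=x_{1,1}\cdots x_{1,n_1}\cdots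 x_{n,1}\cdots x_{n,n_n}$; then $w^{(t)}$ is obtained from $h^t(X)$ by replacing each occurrence of $x_{i,j}$ by a copy of $v_{i,j}$, and a position of $w^{(t)}$ is marked iff it lies in such a copy of some $v_{i,j}$ at a position corresponding to a marked position of $w$ inside $v_{i,j}$. *)

theory Defs
  imports Main
begin

text \<open>Sentential-form symbols: a terminal, or a nonterminal carrying a stack of
flags (head of the list = top of the stack).\<close>
datatype ('n, 't, 'f) sf_sym = Tm 't | Nt 'n "'f list"

text \<open>Productions (Aho's forms):
  Copy A alpha : A -> alpha, the stack of A is copied to every nonterminal of alpha;
  Push A B f   : A -> B f, push flag f;
  Pop A f alpha: A f -> alpha, pop f and copy the remaining stack to every nonterminal of alpha.\<close>
datatype ('n, 't, 'f) iprod =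
    Copy 'n "('n + 't) list"
  | Push 'n 'n 'f
  | Pop 'n 'f "('n + 't) list"

fun inst :: "'f list \<Rightarrow> ('n + 't) \<Rightarrow> ('n, 't, 'f) sf_sym" where
  "inst \<sigma> (Inl B) = Nt B \<sigma>"
| "inst \<sigma> (Inr a) = Tm a"

inductive istep :: "('n, 't, 'f) iprod set \<Rightarrow> ('n, 't, 'f) sf_sym list \<Rightarrow> ('n, 't, 'f) sf_sym list \<Rightarrow> bool"
  for P where
  copy: "Copy A \<alpha> \<in> P \<Longrightarrow> istep P (x @ [Nt A \<sigma>] @ y) (x @ map (inst \<sigma>) \<alpha> @ y)"
| push: "Push A B f \<in> P \<Longrightarrow> istep P (x @ [Nt A \<sigma>] @ y) (x @ [Nt B (f # \<sigma>)] @ y)"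
| pop:  "Pop A f \<alpha> \<in> P \<Longrightarrow> istep P (x @ [Nt A (f # \<sigma>)] @ y) (x @ map (inst \<sigma>) \<alpha> @ y)"

definition ilang :: "('n, 't, 'f) iprod set \<Rightarrow> 'n \<Rightarrow> 't list set" where
  "ilang P S = {w. (istep P)\<^sup>*\<^sup>* [Nt S []] (map Tm w)}"

definition indexed_language :: "'t list set \<Rightarrow> bool" where
  "indexed_language L \<longleftrightarrow>
     (\<exists>(P :: (nat, 't, nat) iprod set) S. finite P \<and> L = ilang P S)"

section \<open>Factorizations and their iteration (indices are 0-based)\<close>

definition Iset :: "nat \<Rightarrow> (nat \<Rightarrow> nat) \<Rightarrow> (nat \<times> nat) set" where
  "Iset n nn = {(i, j). i < n \<and> j < nn i}"

definition ufac :: "(nat \<Rightarrow> nat) \<Rightarrow> (nat \<Rightarrow> nat \<Rightarrow> 'a list) \<Rightarrow> nat \<Rightarrow> 'a list" where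
  "ufac nn v i = concat (map (v i) [0..<nn i])"

fun viter :: "(nat \<Rightarrow> nat) \<Rightarrow> (nat \<Rightarrow> nat \<Rightarrow> 'a list) \<Rightarrow> (nat \<Rightarrow> nat \<Rightarrow> nat)
               \<Rightarrow> nat \<Rightarrow> nat \<Rightarrow> nat \<Rightarrow> 'a list" where
  "viter nn v \<phi> 0 i j = v i j"
| "viter nn v \<phi> (Suc t) i j = ufac nn (viter nn v \<phi> t) (\<phi> i j)"

definition witer :: "nat \<Rightarrow> (nat \<Rightarrow> nat) \<Rightarrow> (nat \<Rightarrow> nat \<Rightarrow> 'a list) \<Rightarrow> (nat \<Rightarrow> nat \<Rightarrow> nat)
               \<Rightarrow> nat \<Rightarrow> 'a list" where
  "witer n nn v \<phi> t = concat (map (ufac nn (viter nn v \<phi> t)) [0..<n])"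

definition uoff :: "(nat \<Rightarrow> nat) \<Rightarrow> (nat \<Rightarrow> nat \<Rightarrow> 'a list) \<Rightarrow> nat \<Rightarrow> nat" where
  "uoff nn v i = length (concat (map (ufac nn v) [0..<i]))"

definition voff_in_u :: "(nat \<Rightarrow> nat \<Rightarrow> 'a list) \<Rightarrow> nat \<Rightarrow> nat \<Rightarrow> nat" where
  "voff_in_u v i j = length (concat (map (v i) [0..<j]))"

definition voff :: "(nat \<Rightarrow> nat) \<Rightarrow> (nat \<Rightarrow> nat \<Rightarrow> 'a list) \<Rightarrow> nat \<Rightarrow> nat \<Rightarrow> nat" where
  "voff nn v i j = uoff nn v i + voff_in_u v i j"

definition threshold_props ::
  "'a list set \<Rightarrow> 'a list \<Rightarrow> nat set \<Rightarrow> nat \<Rightarrow> (nat \<Rightarrow> nat) \<Rightarrow> (nat \<Rightarrow> nat \<Rightarrow> 'a list)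
   \<Rightarrow> (nat \<Rightarrow> nat \<Rightarrow> nat) \<Rightarrow> bool" where
  "threshold_props L w M n nn v \<phi> \<longleftrightarrow>
     \<comment> \<open>(1)\<close>
     w = concat (map (ufac nn v) [0..<n]) \<and>
     \<comment> \<open>(2)\<close>
     (\<forall>(i, j) \<in> Iset n nn. \<phi> i j < n) \<and>
     (\<forall>t. witer n nn v \<phi> t \<in> L) \<and>
     \<comment> \<open>(3)\<close>
     (\<forall>(i, j) \<in> Iset n nn.
        (\<exists>r < length (v i j). voff nn v i j + r \<in> M) \<longrightarrow>
        (\<exists>r < length (ufac nn v (\<phi> i j)). uoff nn v (\<phi> i j) + r \<in> M)) \<and>
     \<comment> \<open>(4)\<close>
     (\<exists>(i, j) \<in> Iset n nn. \<phi> i j = i \<and>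
        (\<exists>r < length (ufac nn v i). uoff nn v i + r \<in> M \<and>
            (r < voff_in_u v i j \<or> voff_in_u v i j + length (v i j) \<le> r)))"

definition is_threshold :: "'a list set \<Rightarrow> nat \<Rightarrow> bool" where
  "is_threshold L l \<longleftrightarrow>
     (\<forall>w \<in> L. \<forall>M. M \<subseteq> {..<length w} \<and> l \<le> card M \<longrightarrow>
        (\<exists>n nn v \<phi>. threshold_props L w M n nn v \<phi>))"

text \<open>Symbols x_{i,j} are represented by the pairs (i,j).\<close>
definition hmor :: "(nat \<Rightarrow> nat) \<Rightarrow> (nat \<Rightarrow> nat \<Rightarrow> nat) \<Rightarrow> nat \<times> nat \<Rightarrow> (nat \<times> nat) list" where
  "hmor nn \<phi> x = (let k = \<phi> (fst x) (snd x) in map (\<lambda>j. (k, j)) [0..<nn k])"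

definition Xword :: "nat \<Rightarrow> (nat \<Rightarrow> nat) \<Rightarrow> (nat \<times> nat) list" where
  "Xword n nn = concat (map (\<lambda>i. map (\<lambda>j. (i, j)) [0..<nn i]) [0..<n])"

definition hpow :: "nat \<Rightarrow> (nat \<Rightarrow> nat) \<Rightarrow> (nat \<Rightarrow> nat \<Rightarrow> nat) \<Rightarrow> nat \<Rightarrow> (nat \<times> nat) list" where
  "hpow n nn \<phi> t = ((\<lambda>xs. concat (map (hmor nn \<phi>) xs)) ^^ t) (Xword n nn)"

text \<open>Positions of w^{(t)} (= the word obtained from h^t(X) by replacing each x_{i,j}
by v_{i,j}) that are marked: position p lies in the copy of v_{i,j} substituted for the
q-th letter of h^t(X), at offset r, and position r of v_{i,j} is marked in w.\<close>
definition marked_iter ::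
  "nat \<Rightarrow> (nat \<Rightarrow> nat) \<Rightarrow> (nat \<Rightarrow> nat \<Rightarrow> 'a list) \<Rightarrow> (nat \<Rightarrow> nat \<Rightarrow> nat) \<Rightarrow> nat set \<Rightarrow> nat \<Rightarrow> nat set" where
  "marked_iter n nn v \<phi> M t =
     (let xs = hpow n nn \<phi> t in
      {p. \<exists>q < length xs. \<exists>r < length (case_prod v (xs ! q)).
            p = length (concat (map (case_prod v) (take q xs))) + r \<and>
            voff nn v (fst (xs ! q)) (snd (xs ! q)) + r \<in> M})"

end

theory Submission imports Defs begin

text \<open>Call a letter x_{i,j} marked if v_{i,j} contains a marked position of w. Distinct
letters of h^t(X) are replaced by disjoint factors of w^(t), so w^(t) has at least as many
marked positions as h^t(X) has marked letters. By (3), h sends a marked letter to a block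
u_{\<phi>(i,j)} that again contains a marked letter, so a block with a marked letter keeps
producing one under iteration. By (4), some block u_i contains a letter x_{i,j} with
\<phi>(i,j) = i and a further marked letter; hence h^{s+1}(u_i) contains a copy of h^s(u_i)
and in addition a descendant of that marked letter, so the number of marked letters
descending from u_i grows by at least one per step. Only properties (2)--(4) are used.\<close>

lemma less_length_concat_split:
  assumes "r < length (concat ys)"
  obtains j r' where "j < length ys" "r' < length (ys ! j)" "r = length (concat (take j ys)) + r'"
proof -
  have "\<exists>j < length ys. \<exists>r' < length (ys ! j). r = length (concat (take j ys)) + r'"
    using assms
  proof (induction ys arbitrary: r)
    case (Cons y ys)
    show ?case
    proof (cases "r < length y")
      case True then show ?thesis by (intro exI[of _ 0]) auto
    next
      case False
      with Cons.prems have "r - length y < length (concat ys)" by auto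
      with Cons.IH obtain j r' where "j < length ys" "r' < length (ys ! j)"
        "r - length y = length (concat (take j ys)) + r'" by blast
      with False show ?thesis by (intro exI[of _ "Suc j"]) auto
    qed
  qed simp
  with that show thesis by blast
qed

lemma funpow_concat_map_concat:
  fixes f :: "'a \<Rightarrow> 'a list"
  shows "((\<lambda>xs. concat (map f xs)) ^^ t) (concat xss) = concat (map ((\<lambda>xs. concat (map f xs)) ^^ t) xss)"
proof (induction t arbitrary: xss)
  case 0 then show ?case by simp
next
  case (Suc t)
  let ?F = "\<lambda>xs. concat (map f xs)"
  have "?F (concat yss) = concat (map ?F yss)" for yss
    by (induction yss) auto
  then have "(?F ^^ Suc t) (concat xss) = (?F ^^ t) (concat (map ?F xss))"
    by (simp only: funpow_Suc_right o_apply)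
  also have "\<dots> = concat (map (?F ^^ t) (map ?F xss))" by (rule Suc.IH)
  also have "\<dots> = concat (map (?F ^^ Suc t) xss)" by (simp only: funpow_Suc_right map_map)
  finally show ?case .
qed

definition block_positions :: "('b \<Rightarrow> 'c list) \<Rightarrow> ('b \<Rightarrow> nat \<Rightarrow> bool) \<Rightarrow> 'b list \<Rightarrow> nat set" where
  "block_positions g Q xs =
     {p. \<exists>q < length xs. \<exists>r < length (g (xs ! q)).
           p = length (concat (map g (take q xs))) + r \<and> Q (xs ! q) r}"

lemma block_positions_Nil [simp]: "block_positions g Q [] = {}"
  by (simp add: block_positions_def)

lemma block_positions_Cons:
  "block_positions g Q (x # xs) =
     {r. r < length (g x) \<and> Q x r} \<union> (\<lambda>p. length (g x) + p) ` block_positions g Q xs"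
  (is "?B = ?A \<union> ?S")
proof
  show "?B \<subseteq> ?A \<union> ?S"
  proof
    fix p assume "p \<in> ?B"
    then obtain q r where "q < length (x # xs)" "r < length (g ((x # xs) ! q))"
      "p = length (concat (map g (take q (x # xs)))) + r" "Q ((x # xs) ! q) r"
      unfolding block_positions_def by blast
    then show "p \<in> ?A \<union> ?S"
      by (cases q) (auto simp: block_positions_def image_iff)
  qed
next
  have "?A \<subseteq> ?B" unfolding block_positions_def by (force intro: exI[of _ 0])
  moreover have "?S \<subseteq> ?B" unfolding block_positions_def by (force intro: exI[of _ "Suc _"])
  ultimately show "?A \<union> ?S \<subseteq> ?B" by blast
qed

lemma finite_block_positions [simp]: "finite (block_positions g Q xs)"
  by (induction xs) (simp_all add: block_positions_Cons)

lemma length_filter_le_card_block_positions: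
  "length (filter (\<lambda>x. \<exists>r < length (g x). Q x r) xs) \<le> card (block_positions g Q xs)"
proof (induction xs)
  case Nil then show ?case by simp
next
  case (Cons x xs)
  let ?A = "{r. r < length (g x) \<and> Q x r}" and ?S = "(\<lambda>p. length (g x) + p) ` block_positions g Q xs"
  have "card (block_positions g Q (x # xs)) = card ?A + card ?S"
    unfolding block_positions_Cons by (rule card_Un_disjoint) auto
  moreover have "card ?S = card (block_positions g Q xs)" by (simp add: card_image)
  moreover have "?A \<noteq> {}" if "\<exists>r < length (g x). Q x r" using that by blast
  then have "(if \<exists>r < length (g x). Q x r then 1 else 0) \<le> card ?A"
    by (auto simp: Suc_le_eq card_gt_0_iff)
  ultimately show ?case using Cons.IH by (auto split: if_splits)
qed

locale marked_factorization =
  fixes n :: nat and nn :: "nat \<Rightarrow> nat" and v :: "nat \<Rightarrow> nat \<Rightarrow> 'a list"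
    and \<phi> :: "nat \<Rightarrow> nat \<Rightarrow> nat" and M :: "nat set"
  assumes \<phi>_less: "\<And>i j. i < n \<Longrightarrow> j < nn i \<Longrightarrow> \<phi> i j < n"
    and marked_propagates: "\<And>i j. i < n \<Longrightarrow> j < nn i \<Longrightarrow>
          \<exists>r < length (v i j). voff nn v i j + r \<in> M \<Longrightarrow>
          \<exists>r < length (ufac nn v (\<phi> i j)). uoff nn v (\<phi> i j) + r \<in> M"
    and marked_self_loop: "\<exists>i < n. \<exists>j < nn i. \<phi> i j = i \<and>
          (\<exists>r < length (ufac nn v i). uoff nn v i + r \<in> M \<and>
             (r < voff_in_u v i j \<or> voff_in_u v i j + length (v i j) \<le> r))"
begin

definition marked_letter :: "nat \<times> nat \<Rightarrow> bool" where
  "marked_letter x \<longleftrightarrow> (\<exists>r < length (case_prod v x). voff nn v (fst x) (snd x) + r \<in> M)"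

definition row :: "nat \<Rightarrow> (nat \<times> nat) list" where
  "row i = map (\<lambda>j. (i, j)) [0..<nn i]"

definition hword :: "(nat \<times> nat) list \<Rightarrow> (nat \<times> nat) list" where
  "hword xs = concat (map (hmor nn \<phi>) xs)"

definition count_marked :: "(nat \<times> nat) list \<Rightarrow> nat" where
  "count_marked xs = length (filter marked_letter xs)"

lemma count_marked_concat: "count_marked (concat xss) = (\<Sum>xs\<leftarrow>xss. count_marked xs)"
  by (simp add: count_marked_def filter_concat length_concat comp_def)

lemma hpow_eq_concat_rows: "hpow n nn \<phi> t = concat (map (\<lambda>i. (hword ^^ t) (row i)) [0..<n])"
proof -
  have "Xword n nn = concat (map row [0..<n])" by (simp add: Xword_def row_def[abs_def])
  then show ?thesis
    using funpow_concat_map_concat[where f = "hmor nn \<phi>" and xss = "map row [0..<n]"]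
    by (simp add: hpow_def hword_def[abs_def] comp_def)
qed

lemma hword_funpow_Suc_row:
  "(hword ^^ Suc s) (row i) = concat (map (\<lambda>j. (hword ^^ s) (row (\<phi> i j))) [0..<nn i])"
proof -
  have "hword (row i) = concat (map (\<lambda>j. row (\<phi> i j)) [0..<nn i])"
    by (simp add: hword_def row_def hmor_def comp_def Let_def)
  then show ?thesis
    using funpow_concat_map_concat[where f = "hmor nn \<phi>" and xss = "map (\<lambda>j. row (\<phi> i j)) [0..<nn i]"]
    by (simp only: funpow_Suc_right o_apply) (simp add: hword_def[abs_def] comp_def)
qed

lemma count_marked_funpow_Suc_row:
  "count_marked ((hword ^^ Suc s) (row i)) = (\<Sum>j<nn i. count_marked ((hword ^^ s) (row (\<phi> i j))))"
  unfolding hword_funpow_Suc_row count_marked_concat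
  by (simp add: comp_def interv_sum_list_conv_sum_set_nat atLeast0LessThan)

lemma count_marked_row_pos: "j < nn i \<Longrightarrow> marked_letter (i, j) \<Longrightarrow> 0 < count_marked (row i)"
  unfolding count_marked_def by (rule length_pos_if_in_set[of "(i, j)"]) (simp add: row_def)

lemma marked_position_in_marked_letter:
  assumes "r < length (ufac nn v i)" "uoff nn v i + r \<in> M"
  obtains j r' where "j < nn i" "marked_letter (i, j)" "r' < length (v i j)" "r = voff_in_u v i j + r'"
proof -
  let ?vs = "map (v i) [0..<nn i]"
  from assms(1) have "r < length (concat ?vs)" by (simp only: ufac_def)
  then obtain j r' where "j < length ?vs" "r' < length (?vs ! j)"
    "r = length (concat (take j ?vs)) + r'"
    by (rule less_length_concat_split)
  then have j: "j < nn i" "r' < length (v i j)" "r = voff_in_u v i j + r'"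
    by (auto simp: voff_in_u_def take_map)
  then have "marked_letter (i, j)"
    using assms(2) unfolding marked_letter_def voff_def by (auto simp: add.assoc)
  with j that show thesis by blast
qed

lemma marked_letter_successor:
  assumes "i < n" "j < nn i" "marked_letter (i, j)"
  obtains j' where "j' < nn (\<phi> i j)" "marked_letter (\<phi> i j, j')"
proof -
  have "\<exists>r < length (v i j). voff nn v i j + r \<in> M"
    using assms(3) by (simp add: marked_letter_def)
  then obtain r where "r < length (ufac nn v (\<phi> i j))" "uoff nn v (\<phi> i j) + r \<in> M"
    using marked_propagates[OF assms(1,2)] by blast
  then obtain j' r' where "j' < nn (\<phi> i j)" "marked_letter (\<phi> i j, j')"
    by (rule marked_position_in_marked_letter)
  with that show thesis by blast
qed

lemma count_marked_funpow_row_pos: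
  "i < n \<Longrightarrow> j < nn i \<Longrightarrow> marked_letter (i, j) \<Longrightarrow> 0 < count_marked ((hword ^^ s) (row i))"
proof (induction s arbitrary: i j)
  case 0 then show ?case by (simp add: count_marked_row_pos)
next
  case (Suc s)
  obtain j' where "j' < nn (\<phi> i j)" "marked_letter (\<phi> i j, j')"
    using marked_letter_successor[OF Suc.prems] .
  then have "0 < count_marked ((hword ^^ s) (row (\<phi> i j)))"
    by (rule Suc.IH[OF \<phi>_less[OF Suc.prems(1,2)]])
  also have "\<dots> \<le> count_marked ((hword ^^ Suc s) (row i))"
    unfolding count_marked_funpow_Suc_row using Suc.prems(2) by (intro member_le_sum) simp_all
  finally show ?case .
qed

lemma count_marked_funpow_self_loop_row: "\<exists>i < n. \<forall>s. s < count_marked ((hword ^^ s) (row i))"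
proof -
  obtain i j r where ij: "i < n" "j < nn i" "\<phi> i j = i"
    and r: "r < length (ufac nn v i)" "uoff nn v i + r \<in> M"
      "r < voff_in_u v i j \<or> voff_in_u v i j + length (v i j) \<le> r"
    using marked_self_loop by blast
  obtain j' r' where j': "j' < nn i" "marked_letter (i, j')"
    and r': "r' < length (v i j')" "r = voff_in_u v i j' + r'"
    by (rule marked_position_in_marked_letter[OF r(1,2)])
  have "j' \<noteq> j" using r(3) r' by auto
  have "s < count_marked ((hword ^^ s) (row i))" for s
  proof (induction s)
    case 0 then show ?case using count_marked_row_pos[OF j'(1,2)] by simp
  next
    case (Suc s)
    let ?c = "\<lambda>j. count_marked ((hword ^^ s) (row (\<phi> i j)))"
    obtain j'' where "j'' < nn (\<phi> i j')" "marked_letter (\<phi> i j', j'')"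
      using marked_letter_successor[OF ij(1) j'(1,2)] .
    then have "0 < ?c j'"
      by (rule count_marked_funpow_row_pos[OF \<phi>_less[OF ij(1) j'(1)]])
    then have "Suc s < ?c j + ?c j'" using Suc.IH ij(3) by simp
    also have "\<dots> = sum ?c {j, j'}" using \<open>j' \<noteq> j\<close> by simp
    also have "\<dots> \<le> (\<Sum>j<nn i. ?c j)" using ij(2) j'(1) by (intro sum_mono2) auto
    finally show ?case unfolding count_marked_funpow_Suc_row .
  qed
  with ij(1) show ?thesis by blast
qed

lemma marked_iter_eq_block_positions:
  "marked_iter n nn v \<phi> M t =
     block_positions (case_prod v) (\<lambda>x r. voff nn v (fst x) (snd x) + r \<in> M) (hpow n nn \<phi> t)"
  by (simp add: marked_iter_def block_positions_def Let_def)

lemma count_marked_hpow_le_card_marked_iter: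
  "count_marked (hpow n nn \<phi> t) \<le> card (marked_iter n nn v \<phi> M t)"
  unfolding marked_iter_eq_block_positions count_marked_def marked_letter_def[abs_def]
  by (rule length_filter_le_card_block_positions)

theorem card_marked_iter_ge: "t \<le> card (marked_iter n nn v \<phi> M t)"
proof -
  obtain i where "i < n" and "t < count_marked ((hword ^^ t) (row i))"
    using count_marked_funpow_self_loop_row by blast
  note this(2)
  also have "count_marked ((hword ^^ t) (row i)) \<le> (\<Sum>i<n. count_marked ((hword ^^ t) (row i)))"
    using \<open>i < n\<close> by (intro member_le_sum) simp_all
  also have "\<dots> = count_marked (hpow n nn \<phi> t)"
    by (simp add: hpow_eq_concat_rows count_marked_concat comp_def
        interv_sum_list_conv_sum_set_nat atLeast0LessThan)
  also have "\<dots> \<le> card (marked_iter n nn v \<phi> M t)"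
    by (rule count_marked_hpow_le_card_marked_iter)
  finally show ?thesis by simp
qed

end

theorem lemma2:
  fixes L :: "'a list set" and l :: nat and w :: "'a list" and M :: "nat set"
    and n :: nat and nn :: "nat \<Rightarrow> nat" and v :: "nat \<Rightarrow> nat \<Rightarrow> 'a list"
    and \<phi> :: "nat \<Rightarrow> nat \<Rightarrow> nat" and t :: nat
  assumes "indexed_language L"
    and "is_threshold L l"
    and "w \<in> L"
    and "M \<subseteq> {..<length w}"
    and "l \<le> card M"
    and "threshold_props L w M n nn v \<phi>"
  shows "t \<le> card (marked_iter n nn v \<phi> M t)"
proof -
  interpret marked_factorization n nn v \<phi> M
    using assms(6) unfolding threshold_props_def Iset_def
    by unfold_locales fastforce+
  show ?thesis by (rule card_marked_iter_ge)
qed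

end
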